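(* Let $C$ be a real $n\times n$ matrix with nonnegative entries that is nilpotent. Then for each $\varepsilon>0$ there exist a diagonal matrix $A$ with nonnegative entries and a matrix $B$ with nonnegative entries such that $C=AB-BA$ and $BA\leq\varepsilon C$ (entrywise).
   Context: Real $n\times n$ matrices are ordered entrywise: $X\leq Y$ means $x_{ij}\leq y_{ij}$ for all $i,j$; a matrix is positive if all its entries are nonnegative. *)

theory Defs
  imports "HOL-Analysis.Analysis"
begin

primrec matrix_pow :: "real ^ 'n ^ 'n \<Rightarrow> nat \<Rightarrow> real ^ 'n ^ 'n" where
  "matrix_pow M 0 = mat 1"
| "matrix_pow M (Suc k) = M ** matrix_pow M k"

definition nilpotent_matrix :: "real ^ 'n ^ 'n \<Rightarrow> bool" where
  "nilpotent_matrix M \<longleftrightarrow> (\<exists>k. matrix_pow M k = 0)"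

definition diagonal_matrix :: "real ^ 'n ^ 'n \<Rightarrow> bool" where
  "diagonal_matrix M \<longleftrightarrow> (\<forall>i j. i \<noteq> j \<longrightarrow> M $ i $ j = 0)"

definition nonneg_matrix :: "real ^ 'n ^ 'n \<Rightarrow> bool" where
  "nonneg_matrix M \<longleftrightarrow> (\<forall>i j. 0 \<le> M $ i $ j)"

definition entrywise_le :: "real ^ 'n ^ 'n \<Rightarrow> real ^ 'n ^ 'n \<Rightarrow> bool" where
  "entrywise_le X Y \<longleftrightarrow> (\<forall>i j. X $ i $ j \<le> Y $ i $ j)"

end

theory Submission
  imports Defs
begin

text \<open>Grade the indices by the height of a row: the number of powers of \<open>C\<close> in which that row
  is nonzero. Nonnegativity makes the height drop strictly along every positive entry
  \<open>C i j\<close>, and nilpotency makes it finite. With weights \<open>a i = (1 + 1/\<epsilon>) ^ height i\<close>,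
  \<open>A = diag a\<close> and \<open>B i j = C i j / (a i - a j)\<close>, the commutator \<open>AB - BA\<close> has entries
  \<open>(a i - a j) B i j = C i j\<close>, while \<open>(BA) i j = C i j a j / (a i - a j) \<le> \<epsilon> C i j\<close>
  because the weights grow by the factor \<open>1 + 1/\<epsilon>\<close> along positive entries.\<close>

lemma matrix_pow_add: "matrix_pow M (k + l) = matrix_pow M k ** matrix_pow M l"
  by (induction k) (auto simp: matrix_mul_assoc)

lemma nonneg_matrix_pow:
  assumes "nonneg_matrix M"
  shows "nonneg_matrix (matrix_pow M k)"
  using assms unfolding nonneg_matrix_def
  by (induction k) (auto simp: mat_def matrix_matrix_mult_def intro!: sum_nonneg)

lemma matrix_pow_Suc_nth_nonzero:
  assumes "nonneg_matrix M" "0 < M $ i $ j" "matrix_pow M k $ j $ l \<noteq> 0"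
  shows "matrix_pow M (Suc k) $ i $ l \<noteq> 0"
proof -
  have terms_nonneg: "0 \<le> M $ i $ m * matrix_pow M k $ m $ l" for m
    using assms(1) nonneg_matrix_pow[OF assms(1)] by (simp add: nonneg_matrix_def)
  have "0 < M $ i $ j * matrix_pow M k $ j $ l"
    using assms terms_nonneg[of j] by (simp add: order_le_neq_trans zero_le_mult_iff)
  also have "\<dots> \<le> (\<Sum>m\<in>UNIV. M $ i $ m * matrix_pow M k $ m $ l)"
    by (rule member_le_sum) (use terms_nonneg in auto)
  finally show ?thesis by (simp add: matrix_matrix_mult_def)
qed

definition nonzero_row_powers :: "real ^ 'n ^ 'n \<Rightarrow> 'n \<Rightarrow> nat set" where
  "nonzero_row_powers M i = {k. \<exists>l. matrix_pow M k $ i $ l \<noteq> 0}"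

definition row_height :: "real ^ 'n ^ 'n \<Rightarrow> 'n \<Rightarrow> nat" where
  "row_height M i = card (nonzero_row_powers M i)"

lemma nonzero_row_powers_subset:
  assumes "matrix_pow M N = 0"
  shows "nonzero_row_powers M i \<subseteq> {..<N}"
proof
  fix k assume "k \<in> nonzero_row_powers M i"
  then obtain l where "matrix_pow M k $ i $ l \<noteq> 0"
    unfolding nonzero_row_powers_def by blast
  moreover have "matrix_pow M k = 0" if "N \<le> k"
    using matrix_pow_add[of M "k - N" N] assms that by simp
  ultimately show "k \<in> {..<N}" by force
qed

lemma row_height_less:
  assumes "nonneg_matrix M" "nilpotent_matrix M" "0 < M $ i $ j"
  shows "row_height M j < row_height M i"
proof -
  obtain N where "matrix_pow M N = 0"
    using assms(2) unfolding nilpotent_matrix_def by blast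
  then have finite: "finite (nonzero_row_powers M i')" for i'
    by (meson finite_lessThan finite_subset nonzero_row_powers_subset)
  have "insert 0 (Suc ` nonzero_row_powers M j) \<subseteq> nonzero_row_powers M i"
  proof (intro insert_subsetI image_subsetI)
    show "0 \<in> nonzero_row_powers M i"
      by (auto simp: nonzero_row_powers_def mat_def intro!: exI[of _ i])
    show "Suc k \<in> nonzero_row_powers M i" if "k \<in> nonzero_row_powers M j" for k
      using that matrix_pow_Suc_nth_nonzero[OF assms(1,3)]
      unfolding nonzero_row_powers_def by blast
  qed
  then have "card (insert 0 (Suc ` nonzero_row_powers M j)) \<le> row_height M i"
    unfolding row_height_def by (rule card_mono[OF finite])
  moreover have "card (insert 0 (Suc ` nonzero_row_powers M j)) = Suc (row_height M j)"
    using finite by (simp add: card_image row_height_def)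
  ultimately show ?thesis by simp
qed

definition diag_matrix :: "('n \<Rightarrow> real) \<Rightarrow> real ^ 'n ^ 'n" where
  "diag_matrix a = (\<chi> i j. if i = j then a i else 0)"

lemma diag_matrix_mult_nth: "(diag_matrix a ** B) $ i $ j = a i * B $ i $ j"
  unfolding diag_matrix_def matrix_matrix_mult_def
  by (simp add: if_distrib[of "\<lambda>x. x * _"] cong: if_cong)

lemma matrix_mult_diag_nth: "(B ** diag_matrix a) $ i $ j = B $ i $ j * a j"
  by (simp add: diag_matrix_def matrix_matrix_mult_def if_distrib cong: if_cong)

lemma nonneg_commutator_decomposition_of_weights:
  fixes C :: "real ^ 'n ^ 'n" and a :: "'n \<Rightarrow> real"
  assumes "nonneg_matrix C" "0 < \<epsilon>" "\<And>i. 0 < a i"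
    and weight_gap: "\<And>i j. 0 < C $ i $ j \<Longrightarrow> a j \<le> \<epsilon> * (a i - a j)"
  shows "\<exists>A B :: real ^ 'n ^ 'n. diagonal_matrix A \<and> nonneg_matrix A \<and> nonneg_matrix B
           \<and> C = A ** B - B ** A \<and> entrywise_le (B ** A) (\<epsilon> *\<^sub>R C)"
proof -
  define B :: "real ^ 'n ^ 'n" where "B = (\<chi> i j. C $ i $ j / (a i - a j))"
  have entry_cases: "C $ i $ j = 0 \<or> (0 < C $ i $ j \<and> 0 < a i - a j \<and> a j \<le> \<epsilon> * (a i - a j))"
    for i j
  proof (cases "C $ i $ j = 0")
    case False
    with assms(1) have positive: "0 < C $ i $ j" by (metis nonneg_matrix_def order_le_less)
    then have "0 < \<epsilon> * (a i - a j)"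
      using weight_gap[OF positive] assms(3)[of j] by linarith
    then show ?thesis
      using positive weight_gap[OF positive] assms(2) by (simp add: zero_less_mult_iff)
  qed simp
  have "0 \<le> B $ i $ j" for i j
    using entry_cases[of i j] by (auto simp: B_def)
  then have B_nonneg: "nonneg_matrix B"
    by (simp add: nonneg_matrix_def)
  have "C $ i $ j = (a i - a j) * B $ i $ j" for i j
    using entry_cases[of i j] by (auto simp: B_def)
  then have commutator: "C = diag_matrix a ** B - B ** diag_matrix a"
    by (simp add: vec_eq_iff diag_matrix_mult_nth matrix_mult_diag_nth algebra_simps)
  have "(B ** diag_matrix a) $ i $ j \<le> \<epsilon> * C $ i $ j" for i j
    using entry_cases[of i j]
  proof
    assume "C $ i $ j = 0"
    then show ?thesis by (simp add: matrix_mult_diag_nth B_def)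
  next
    assume "0 < C $ i $ j \<and> 0 < a i - a j \<and> a j \<le> \<epsilon> * (a i - a j)"
    then have "C $ i $ j * (a j / (a i - a j)) \<le> C $ i $ j * \<epsilon>"
      by (intro mult_left_mono) (auto simp: divide_le_eq)
    then show ?thesis
      by (simp add: matrix_mult_diag_nth B_def mult.commute)
  qed
  then show ?thesis
    using B_nonneg commutator assms(3)
    by (intro exI[of _ "diag_matrix a"] exI[of _ B])
       (auto simp: diagonal_matrix_def nonneg_matrix_def entrywise_le_def diag_matrix_def
         intro: less_imp_le)
qed

theorem proposition4p2:
  fixes C :: "real ^ 'n ^ 'n" and \<epsilon> :: real
  assumes "nonneg_matrix C" and "nilpotent_matrix C" and "\<epsilon> > 0"
  shows "\<exists>A B :: real ^ 'n ^ 'n. diagonal_matrix A \<and> nonneg_matrix A \<and> nonneg_matrix B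
           \<and> C = A ** B - B ** A \<and> entrywise_le (B ** A) (\<epsilon> *\<^sub>R C)"
proof (rule nonneg_commutator_decomposition_of_weights)
  define r where "r = 1 + 1 / \<epsilon>"
  have "1 < r" using assms(3) by (simp add: r_def)
  show "0 < r ^ row_height C i" for i using \<open>1 < r\<close> by simp
  show "r ^ row_height C j \<le> \<epsilon> * (r ^ row_height C i - r ^ row_height C j)"
    if "0 < C $ i $ j" for i j
  proof -
    have "r * r ^ row_height C j \<le> r ^ row_height C i"
      using row_height_less[OF assms(1,2) that] \<open>1 < r\<close>
      by (metis power_Suc power_increasing less_eq_Suc_le less_imp_le)
    then show ?thesis using assms(3) by (simp add: r_def field_simps)
  qed
qed (use assms in auto)

end
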